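(* Let $p\ge 3$ and let $m_0,\dots,m_{p-1}$ be positive integers with $m=\sum_{i=0}^{p-1}m_i$ and $m_i<\lfloor m/2\rfloor$ for all $i$. Consider homogeneous communication parameters $\gamma=\beta=1$ and $0<\alpha<1$ with $\lceil\log_2 p\rceil\alpha<1$. Then every communication tree on $\{0,\dots,p-1\}$ that has minimum completion time among all such trees (with any root) has a root with at least two children, and its completion time is at least $m+2\alpha$.
   Context: Processors $0,\dots,p-1$; processor $i$ has a data block of size $m_i$; $\mathrm{Size}(R)=\sum_{i\in R}m_i$. Transmitting $s$ units between any two processors costs $\alpha+\beta s$; local copying of $s$ units costs $\gamma s$. A communication tree on a nonempty set $R$ with root $r\in R$ is either trivial ($R=\{r\}$), or the root $r$ with a sequence of entries $(E_0,\dots,E_j)$ where exactly one entry is a "local copy" marker, every other entry is a communication tree on a set $R_t$ with root $r_t$ (the children of $r$ are these $r_t$), there is at least one tree entry, and $\{r\}$ together with the $R_t$ partition $R$. Completion time: trivial tree $0$; otherwise $c_{-1}=0$, $c_t=c_{t-1}+\gamma m_r$ for the copy marker, $c_t=\max(c_{t-1},\mathrm{cost}(E_t))+\alpha+\beta\,\mathrm{Size}(R_t)$ for a tree entry; $\mathrm{cost}=c_j$. *)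

theory Defs
  imports Complex_Main
begin

text \<open>A communication tree: a root processor together with a sequence of entries.
  An entry is either the local-copy marker or a subtree.\<close>

datatype ctree = Node nat "centry list"
     and centry = Copy | Sub ctree

primrec croot :: "ctree \<Rightarrow> nat" where
  "croot (Node r es) = r"

primrec subtrees :: "centry list \<Rightarrow> ctree list" where
  "subtrees [] = []"
| "subtrees (e # es) = (case e of Copy \<Rightarrow> subtrees es | Sub t \<Rightarrow> t # subtrees es)"

fun nodes :: "ctree \<Rightarrow> nat set"
and nodes_es :: "centry list \<Rightarrow> nat set" where
  "nodes (Node r es) = insert r (nodes_es es)"
| "nodes_es [] = {}"
| "nodes_es (Copy # es) = nodes_es es"
| "nodes_es (Sub t # es) = nodes t \<union> nodes_es es"

fun ctree_wf :: "ctree \<Rightarrow> bool"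
and ctree_wf_es :: "centry list \<Rightarrow> bool" where
  "ctree_wf (Node r es) =
     (es = [] \<or>
      (length (filter (\<lambda>e. e = Copy) es) = 1 \<and>
       subtrees es \<noteq> [] \<and>
       ctree_wf_es es \<and>
       r \<notin> nodes_es es \<and>
       (\<forall>i < length (subtrees es). \<forall>j < length (subtrees es).
          i \<noteq> j \<longrightarrow> nodes (subtrees es ! i) \<inter> nodes (subtrees es ! j) = {})))"
| "ctree_wf_es [] = True"
| "ctree_wf_es (Copy # es) = ctree_wf_es es"
| "ctree_wf_es (Sub t # es) = (ctree_wf t \<and> ctree_wf_es es)"

definition Size :: "(nat \<Rightarrow> nat) \<Rightarrow> nat set \<Rightarrow> real" where
  "Size m R = (\<Sum>i\<in>R. real (m i))"

fun ctime :: "real \<Rightarrow> real \<Rightarrow> real \<Rightarrow> (nat \<Rightarrow> nat) \<Rightarrow> ctree \<Rightarrow> real"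
and ctime_es :: "real \<Rightarrow> real \<Rightarrow> real \<Rightarrow> (nat \<Rightarrow> nat) \<Rightarrow> nat \<Rightarrow> real \<Rightarrow> centry list \<Rightarrow> real" where
  "ctime \<alpha> \<beta> \<gamma> m (Node r es) = (if es = [] then 0 else ctime_es \<alpha> \<beta> \<gamma> m r 0 es)"
| "ctime_es \<alpha> \<beta> \<gamma> m r c [] = c"
| "ctime_es \<alpha> \<beta> \<gamma> m r c (Copy # es) = ctime_es \<alpha> \<beta> \<gamma> m r (c + \<gamma> * real (m r)) es"
| "ctime_es \<alpha> \<beta> \<gamma> m r c (Sub t # es) =
     ctime_es \<alpha> \<beta> \<gamma> m r (max c (ctime \<alpha> \<beta> \<gamma> m t) + \<alpha> + \<beta> * Size m (nodes t)) es"

primrec root_children :: "ctree \<Rightarrow> nat" where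
  "root_children (Node r es) = length (subtrees es)"

end

theory Submission imports Defs begin

(* Each block other than the root's reaches the root in exactly one transmission, and each child
   costs one startup alpha, so a tree whose root has k children costs at least m + k alpha.
   Splitting the processor set into halves recursively, and attaching the lighter half below the
   root of the heavier one, gives a tree of cost at most m + ceil(log2 p) alpha < m + 1.
   If the root r had a single child t, it would wait for t (cost at least Size t + alpha) and then
   receive all of Size t, paying at least 2 Size t + 2 alpha; since m_r <= m/2 - 1, we have
   Size t >= m/2 + 1, so this exceeds m + 2 and such a tree is not optimal. *)

lemma finite_nodes: "finite (nodes t)" "finite (nodes_es es)"
  by (induction t and es rule: nodes_nodes_es.induct) auto

lemma subtrees_append [simp]: "subtrees (xs @ ys) = subtrees xs @ subtrees ys"
  by (induction xs) (auto split: centry.splits)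

lemma nodes_es_append [simp]: "nodes_es (xs @ ys) = nodes_es xs \<union> nodes_es ys"
proof (induction xs)
  case (Cons e xs) then show ?case by (cases e) auto
qed simp

lemma ctree_wf_es_append [simp]: "ctree_wf_es (xs @ ys) \<longleftrightarrow> ctree_wf_es xs \<and> ctree_wf_es ys"
proof (induction xs)
  case (Cons e xs) then show ?case by (cases e) auto
qed simp

lemma nodes_es_eq_UN_subtrees: "nodes_es es = (\<Union>t\<in>set (subtrees es). nodes t)"
proof (induction es)
  case (Cons e xs) then show ?case by (cases e) auto
qed simp

lemma ctree_wf_es_subtree: "ctree_wf_es es \<Longrightarrow> t \<in> set (subtrees es) \<Longrightarrow> ctree_wf t"
proof (induction es)
  case (Cons e xs) then show ?case by (cases e) auto
qed simp

lemma ctime_es_append: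
  "ctime_es \<alpha> \<beta> \<gamma> m r c (xs @ ys) = ctime_es \<alpha> \<beta> \<gamma> m r (ctime_es \<alpha> \<beta> \<gamma> m r c xs) ys"
proof (induction xs arbitrary: c)
  case (Cons e xs) then show ?case by (cases e) auto
qed simp

lemma Size_nonneg: "0 \<le> Size m S"
  unfolding Size_def by (simp add: sum_nonneg)

lemma Size_Un_disjoint:
  "finite A \<Longrightarrow> finite B \<Longrightarrow> A \<inter> B = {} \<Longrightarrow> Size m (A \<union> B) = Size m A + Size m B"
  unfolding Size_def by (simp add: sum.union_disjoint)

lemma Size_insert: "finite A \<Longrightarrow> r \<notin> A \<Longrightarrow> Size m (insert r A) = real (m r) + Size m A"
  unfolding Size_def by simp

lemma Size_UN_disjoint_nodes:
  assumes "\<forall>i<length ts. \<forall>j<length ts. i \<noteq> j \<longrightarrow> nodes (ts ! i) \<inter> nodes (ts ! j) = {}"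
  shows "Size m (\<Union>t\<in>set ts. nodes t) = (\<Sum>t\<leftarrow>ts. Size m (nodes t))"
  using assms
proof (induction ts)
  case (Cons t ts)
  have "\<forall>i<length ts. \<forall>j<length ts. i \<noteq> j \<longrightarrow> nodes (ts ! i) \<inter> nodes (ts ! j) = {}"
    using Cons.prems by (metis Suc_less_eq length_Cons nat.inject nth_Cons_Suc)
  moreover have "nodes t \<inter> nodes t' = {}" if "t' \<in> set ts" for t'
  proof -
    obtain j where "j < length ts" "t' = ts ! j" using \<open>t' \<in> set ts\<close> by (metis in_set_conv_nth)
    then show ?thesis using Cons.prems[rule_format, of 0 "Suc j"] by simp
  qed
  ultimately show ?case
    using Cons.IH by (auto simp: Size_Un_disjoint finite_nodes Int_UN_distrib)
qed (simp add: Size_def)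

lemma ctime_es_ge_start:
  assumes "0 \<le> \<alpha>" "0 \<le> \<beta>" "0 \<le> \<gamma>"
  shows "c \<le> ctime_es \<alpha> \<beta> \<gamma> m r c es"
proof (induction es arbitrary: c)
  case (Cons e es)
  show ?case
  proof (cases e)
    case Copy
    have "0 \<le> \<gamma> * real (m r)" using assms(3) by simp
    then show ?thesis using Copy Cons.IH[of "c + \<gamma> * real (m r)"] by simp
  next
    case (Sub t)
    then show ?thesis
      using Cons.IH[of "max c (ctime \<alpha> \<beta> \<gamma> m t) + \<alpha> + \<beta> * Size m (nodes t)"] assms
        mult_nonneg_nonneg[OF assms(2) Size_nonneg[of m "nodes t"]] by simp
  qed
qed simp

lemma ctime_es_ge_sum:
  "c + real (length (filter (\<lambda>e. e = Copy) es)) * (\<gamma> * real (m r))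
     + real (length (subtrees es)) * \<alpha> + \<beta> * (\<Sum>t\<leftarrow>subtrees es. Size m (nodes t))
   \<le> ctime_es \<alpha> \<beta> \<gamma> m r c es"
proof (induction es arbitrary: c)
  case (Cons e es)
  show ?case
  proof (cases e)
    case Copy
    then show ?thesis using Cons.IH[of "c + \<gamma> * real (m r)"] by (simp add: algebra_simps)
  next
    case (Sub t)
    then show ?thesis
      using Cons.IH[of "max c (ctime \<alpha> \<beta> \<gamma> m t) + \<alpha> + \<beta> * Size m (nodes t)"]
      by (simp add: algebra_simps)
  qed
qed simp

lemma ctime_es_ge_subtree:
  assumes "0 \<le> \<alpha>" "0 \<le> \<beta>" "0 \<le> \<gamma>" and "t \<in> set (subtrees es)"
  shows "ctime \<alpha> \<beta> \<gamma> m t + \<alpha> + \<beta> * Size m (nodes t) \<le> ctime_es \<alpha> \<beta> \<gamma> m r c es"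
  using assms(4)
proof (induction es arbitrary: c)
  case (Cons e es)
  show ?case
  proof (cases e)
    case Copy
    then show ?thesis using Cons by simp
  next
    case (Sub t')
    let ?c = "max c (ctime \<alpha> \<beta> \<gamma> m t') + \<alpha> + \<beta> * Size m (nodes t')"
    show ?thesis
    proof (cases "t = t'")
      case True
      then show ?thesis using Sub ctime_es_ge_start[OF assms(1-3), of ?c m r es] by simp
    next
      case False
      then show ?thesis using Cons Sub by simp
    qed
  qed
qed simp

lemma ctime_ge_Size_plus_children:
  assumes "ctree_wf (Node r es)" "es \<noteq> []"
  shows "Size m (nodes (Node r es)) + real (root_children (Node r es)) * \<alpha> \<le> ctime \<alpha> 1 1 m (Node r es)"
proof -
  have wf: "length (filter (\<lambda>e. e = Copy) es) = 1" "r \<notin> nodes_es es"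
    "\<forall>i<length (subtrees es). \<forall>j<length (subtrees es). i \<noteq> j \<longrightarrow>
       nodes (subtrees es ! i) \<inter> nodes (subtrees es ! j) = {}"
    using assms by auto
  have "Size m (nodes (Node r es)) = real (m r) + (\<Sum>t\<leftarrow>subtrees es. Size m (nodes t))"
    using wf Size_UN_disjoint_nodes[OF wf(3), of m]
    by (simp add: Size_insert finite_nodes nodes_es_eq_UN_subtrees[symmetric])
  then show ?thesis
    using ctime_es_ge_sum[of 0 es 1 m r "\<alpha>" 1] wf(1) assms(2) by simp
qed

lemma ctime_single_child_ge:
  assumes "0 \<le> \<alpha>" and wf: "ctree_wf (Node r es)" and child: "subtrees es = [t]"
    and three: "3 \<le> card (nodes (Node r es))"
  shows "2 * (Size m (nodes (Node r es)) - real (m r)) + 2 * \<alpha> \<le> ctime \<alpha> 1 1 m (Node r es)"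
proof -
  have es: "es \<noteq> []" using child by auto
  have wf_t: "ctree_wf t" using wf es child ctree_wf_es_subtree by auto
  have nodes_t: "nodes (Node r es) = insert r (nodes t)" "r \<notin> nodes t"
    using wf es child nodes_es_eq_UN_subtrees[of es] by auto
  then have Size_t: "Size m (nodes t) = Size m (nodes (Node r es)) - real (m r)"
    by (simp add: Size_insert finite_nodes)
  obtain r' es' where t: "t = Node r' es'" by (cases t)
  have "es' \<noteq> []" using three nodes_t t by (cases "es' = []") auto
  then have "1 \<le> root_children t" using wf_t t by (cases "subtrees es'") auto
  then have "\<alpha> \<le> real (root_children t) * \<alpha>"
    using assms(1) mult_right_mono[of 1 "real (root_children t)" \<alpha>] by simp
  then have "Size m (nodes t) + \<alpha> \<le> ctime \<alpha> 1 1 m t"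
    using ctime_ge_Size_plus_children[of r' es' m \<alpha>] wf_t t \<open>es' \<noteq> []\<close> by simp
  moreover have "ctime \<alpha> 1 1 m t + \<alpha> + Size m (nodes t) \<le> ctime \<alpha> 1 1 m (Node r es)"
    using ctime_es_ge_subtree[OF assms(1), of 1 1 t es m r 0] child es by simp
  ultimately show ?thesis unfolding Size_t[symmetric] by linarith
qed

lemma ctree_wf_snoc_Sub:
  assumes wf: "ctree_wf (Node r es)" "es \<noteq> []" and wf_t: "ctree_wf t"
    and disj: "nodes (Node r es) \<inter> nodes t = {}"
  shows "ctree_wf (Node r (es @ [Sub t]))"
proof -
  let ?L = "subtrees es"
  have old: "length (filter (\<lambda>e. e = Copy) es) = 1" "ctree_wf_es es" "r \<notin> nodes_es es"
    "\<forall>i<length ?L. \<forall>j<length ?L. i \<noteq> j \<longrightarrow> nodes (?L ! i) \<inter> nodes (?L ! j) = {}"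
    using wf by auto
  have new: "nodes (?L ! i) \<inter> nodes t = {}" if "i < length ?L" for i
  proof -
    have "?L ! i \<in> set ?L" using that by simp
    then have "nodes (?L ! i) \<subseteq> nodes_es es" by (auto simp: nodes_es_eq_UN_subtrees)
    then show ?thesis using disj by auto
  qed
  have "nodes ((?L @ [t]) ! i) \<inter> nodes ((?L @ [t]) ! j) = {}"
    if i: "i < Suc (length ?L)" and j: "j < Suc (length ?L)" and ij: "i \<noteq> j" for i j
  proof -
    consider "i < length ?L" "j < length ?L" | "i = length ?L" "j < length ?L"
      | "i < length ?L" "j = length ?L"
      using i j ij by linarith
    then show ?thesis
      using ij old(4) new by cases (auto simp: nth_append)
  qed
  then show ?thesis using old wf_t disj by auto
qed

lemma ctree_join:
  assumes "0 \<le> \<alpha>" "0 \<le> \<delta>"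
    and X: "ctree_wf TX" "ctime \<alpha> 1 1 m TX \<le> Size m (nodes TX) + \<delta>"
    and Y: "ctree_wf TY" "ctime \<alpha> 1 1 m TY \<le> Size m (nodes TY) + \<delta>"
    and disj: "nodes TX \<inter> nodes TY = {}" and smaller: "Size m (nodes TY) \<le> Size m (nodes TX)"
  shows "\<exists>T. ctree_wf T \<and> nodes T = nodes TX \<union> nodes TY \<and>
           ctime \<alpha> 1 1 m T \<le> Size m (nodes TX \<union> nodes TY) + \<delta> + \<alpha>"
proof -
  obtain r es where TX: "TX = Node r es" by (cases TX)
  have Size_XY: "Size m (nodes TX \<union> nodes TY) = Size m (nodes TX) + Size m (nodes TY)"
    using disj by (simp add: Size_Un_disjoint finite_nodes)
  show ?thesis
  proof (cases "es = []")
    case True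
    let ?T = "Node r [Copy, Sub TY]"
    have "Size m (nodes TX) = real (m r)" using TX True by (simp add: Size_def)
    then have "ctime \<alpha> 1 1 m ?T \<le> Size m (nodes TX \<union> nodes TY) + \<delta> + \<alpha>"
      using Y(2) smaller Size_XY \<open>0 \<le> \<delta>\<close> by simp
    moreover have "ctree_wf ?T" "nodes ?T = nodes TX \<union> nodes TY"
      using Y(1) disj TX True by auto
    ultimately show ?thesis by blast
  next
    case False
    let ?T = "Node r (es @ [Sub TY])"
    have "ctime \<alpha> 1 1 m ?T = max (ctime \<alpha> 1 1 m TX) (ctime \<alpha> 1 1 m TY) + \<alpha> + Size m (nodes TY)"
      using TX False by (simp add: ctime_es_append)
    then have "ctime \<alpha> 1 1 m ?T \<le> Size m (nodes TX \<union> nodes TY) + \<delta> + \<alpha>"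
      using X(2) Y(2) smaller Size_XY by simp
    moreover have "ctree_wf ?T"
      using ctree_wf_snoc_Sub[of r es TY] X(1) Y(1) disj TX False by simp
    moreover have "nodes ?T = nodes TX \<union> nodes TY" using TX by auto
    ultimately show ?thesis by blast
  qed
qed

lemma ctree_exists_ctime_le:
  assumes "0 \<le> \<alpha>" "finite S" "S \<noteq> {}" "card S \<le> 2 ^ d"
  shows "\<exists>T. ctree_wf T \<and> nodes T = S \<and> ctime \<alpha> 1 1 m T \<le> Size m S + real d * \<alpha>"
proof -
  have singleton: "\<exists>T. ctree_wf T \<and> nodes T = S \<and> ctime \<alpha> 1 1 m T \<le> Size m S + real d * \<alpha>"
    if "card S = 1" for S d
  proof -
    obtain r where "S = {r}" using \<open>card S = 1\<close> card_1_singletonE by blast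
    then show ?thesis using Size_nonneg[of m S] assms(1) by (intro exI[of _ "Node r []"]) simp
  qed
  show ?thesis
    using assms(2-4)
  proof (induction d arbitrary: S)
    case 0
    then have "card S = 1" by (simp add: le_Suc_eq card_eq_0_iff)
    then show ?case using singleton[of S 0] by simp
  next
    case (Suc d)
    show ?case
    proof (cases "card S = 1")
      case False
      then have "2 \<le> card S" using Suc.prems(1,2) card_0_eq[of S] by linarith
      obtain A where A: "A \<subseteq> S" "card A = card S div 2"
        using obtain_subset_with_card_n[of "card S div 2" S] by auto
      define B where "B = S - A"
      have fin: "finite A" "finite B" using A(1) Suc.prems(1) finite_subset B_def by auto
      have "card B = card S - card S div 2" using A Suc.prems(1) fin by (simp add: B_def card_Diff_subset)
      then have "A \<noteq> {}" "B \<noteq> {}" "card A \<le> 2 ^ d" "card B \<le> 2 ^ d"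
        using A \<open>2 \<le> card S\<close> Suc.prems(3) by auto
      then obtain TA TB where
        TA: "ctree_wf TA" "nodes TA = A" "ctime \<alpha> 1 1 m TA \<le> Size m A + real d * \<alpha>" and
        TB: "ctree_wf TB" "nodes TB = B" "ctime \<alpha> 1 1 m TB \<le> Size m B + real d * \<alpha>"
        using Suc.IH fin by meson
      have disj: "A \<inter> B = {}" and S: "S = A \<union> B" using A(1) B_def by auto
      have "0 \<le> real d * \<alpha>" using assms(1) by simp
      have "\<exists>T. ctree_wf T \<and> nodes T = A \<union> B \<and> ctime \<alpha> 1 1 m T \<le> Size m (A \<union> B) + real d * \<alpha> + \<alpha>"
      proof (cases "Size m B \<le> Size m A")
        case True
        then show ?thesis
          using ctree_join[of \<alpha> "real d * \<alpha>" TA m TB] TA TB disj \<open>0 \<le> real d * \<alpha>\<close> assms(1) by simp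
      next
        case False
        then show ?thesis
          using ctree_join[of \<alpha> "real d * \<alpha>" TB m TA] TA TB disj \<open>0 \<le> real d * \<alpha>\<close> assms(1)
          by (simp add: Un_commute Int_commute)
      qed
      then show ?thesis using S by (simp add: algebra_simps)
    qed (use singleton in blast)
  qed
qed

lemma real_le_two_power_ceiling_log:
  assumes "1 \<le> n"
  shows "real n \<le> 2 ^ nat \<lceil>log 2 (real n)\<rceil>"
proof -
  have "real n = 2 powr log 2 (real n)" using assms by simp
  also have "\<dots> \<le> 2 powr real (nat \<lceil>log 2 (real n)\<rceil>)" by (intro powr_mono) linarith+
  also have "\<dots> = 2 ^ nat \<lceil>log 2 (real n)\<rceil>" by (simp add: powr_realpow)
  finally show ?thesis .
qed

lemma ctree_exists_ctime_le_log:
  assumes "0 \<le> \<alpha>" "1 \<le> p"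
  shows "\<exists>T. ctree_wf T \<and> nodes T = {..<p} \<and>
           ctime \<alpha> 1 1 m T \<le> Size m {..<p} + real_of_int \<lceil>log 2 (real p)\<rceil> * \<alpha>"
proof -
  let ?d = "nat \<lceil>log 2 (real p)\<rceil>"
  have "real (card {..<p}) \<le> 2 ^ ?d"
    using real_le_two_power_ceiling_log[OF assms(2)] by simp
  then have "card {..<p} \<le> 2 ^ ?d"
    by (metis of_nat_le_iff of_nat_numeral of_nat_power)
  moreover have "{..<p} \<noteq> {}" using assms(2) by (simp add: lessThan_empty_iff)
  moreover have "real ?d = real_of_int \<lceil>log 2 (real p)\<rceil>"
    using assms(2) by simp
  ultimately show ?thesis
    using ctree_exists_ctime_le[OF assms(1) finite_lessThan, of p ?d m] by simp
qed

theorem lemma1: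
  fixes p :: nat and m :: "nat \<Rightarrow> nat" and \<alpha> :: real and T :: ctree
  assumes "p \<ge> 3"
    and "\<forall>i<p. m i > 0"
    and "\<forall>i<p. m i < (\<Sum>j<p. m j) div 2"
    and "0 < \<alpha>" and "\<alpha> < 1"
    and "real_of_int \<lceil>log 2 (real p)\<rceil> * \<alpha> < 1"
    and "ctree_wf T" and "nodes T = {..<p}"
    and "\<forall>T'. ctree_wf T' \<and> nodes T' = {..<p} \<longrightarrow> ctime \<alpha> 1 1 m T \<le> ctime \<alpha> 1 1 m T'"
  shows "root_children T \<ge> 2 \<and> ctime \<alpha> 1 1 m T \<ge> real (\<Sum>j<p. m j) + 2 * \<alpha>"
proof -
  let ?M = "\<Sum>j<p. m j"
  have M: "Size m {..<p} = real ?M" unfolding Size_def by simp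
  obtain T' where "ctree_wf T'" "nodes T' = {..<p}"
    "ctime \<alpha> 1 1 m T' \<le> Size m {..<p} + real_of_int \<lceil>log 2 (real p)\<rceil> * \<alpha>"
    using ctree_exists_ctime_le_log[of \<alpha> p m] assms(1,4) by auto
  then have opt: "ctime \<alpha> 1 1 m T < real ?M + 1" using assms(6,9) M by fastforce
  obtain r es where T: "T = Node r es" by (cases T)
  have card: "card (nodes T) = p" using assms(8) by simp
  then have "es \<noteq> []" using assms(1) T by auto
  have children: "2 \<le> root_children T"
  proof (rule ccontr)
    assume "\<not> 2 \<le> root_children T"
    moreover have "subtrees es \<noteq> []" using assms(7) T \<open>es \<noteq> []\<close> by auto
    ultimately obtain t where "subtrees es = [t]" using T by (cases "subtrees es") (auto simp: Suc_le_eq)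
    then have "2 * (real ?M - real (m r)) + 2 * \<alpha> \<le> ctime \<alpha> 1 1 m T"
      using ctime_single_child_ge[of \<alpha> r es t m] assms(1,4,7,8) T card M by simp
    moreover have "2 * real (m r) + 2 \<le> real ?M"
    proof -
      have "2 * m r + 2 \<le> ?M" using assms(3,8) T by auto
      then have "real (2 * m r + 2) \<le> real ?M" by (rule of_nat_mono)
      then show ?thesis by simp
    qed
    ultimately show False using opt assms(4) by argo
  qed
  then have "2 * \<alpha> \<le> real (root_children T) * \<alpha>"
    using assms(4) by (intro mult_right_mono) auto
  then show ?thesis
    using children ctime_ge_Size_plus_children[of r es m \<alpha>] assms(7,8) T \<open>es \<noteq> []\<close> M by simp
qed

end
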